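(* Let $n\ge2$, $f:\mathbb{R}^n\to\mathbb{R}^n$ continuously differentiable, $b_0\in\mathbb{R}^n_{\ge0}$, $\mu,\theta>0$, $r:=\mu/\theta$. Suppose $x^*\in\mathbb{R}^n_{\ge0}$ and $u_*>0$ satisfy $x^*_n=r$ and $f(x^* )-u_*re_n+b_0=0$. Let $J:=\partial f/\partial x(x^* )$, $H_n(s):=e_n^T\big(sI-(J-u_*e_ne_n^T)\big)^{-1}e_n$, and assume $H_n(0)>0$ and that there exists a symmetric positive definite $P_1\in\mathbb{R}^{(n-1)\times(n-1)}$ such that, with $P:=\mathrm{diag}(P_1,1)$, $$(J-u_*e_ne_n^T)^TP+P(J-u_*e_ne_n^T)\ \text{is negative definite}$$ (equivalently, writing $J_{11}=S^TJS$, $J_{12}=S^TJe_n$, $J_{21}=e_n^TJS$, $J_{22}=e_n^TJe_n$, the matrix $\begin{bmatrix}P_1J_{11}+J_{11}^TP_1 & P_1J_{12}+J_{21}^T\\ J_{12}^TP_1+J_{21} & 2(J_{22}-u_* )\end{bmatrix}$ is negative definite). Then for all $\eta,k_p>0$ the equilibrium $\big(x^*,\ \mu/(\eta u_* ),\ u_*/k_p\big)$ of $$\dot x=f(x)-k_px_nz_2e_n+b_0,\qquad \dot z_1=\mu-\eta k_pz_1z_2,\qquad \dot z_2=\theta x_n-\eta k_pz_1z_2$$ is locally exponentially stable.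
   Context: $S:=[e_1\ \cdots\ e_{n-1}]$, $e_i$ standard basis vectors of $\mathbb{R}^n$; $x_n=e_n^Tx$. Hurwitz stable: all eigenvalues have negative real part. An equilibrium is called locally exponentially stable here if the Jacobian matrix of the vector field at the equilibrium is Hurwitz stable. *)

theory Defs
  imports "HOL-Analysis.Analysis"
begin

definition hurwitz :: "real^'m^'m \<Rightarrow> bool" where
  "hurwitz A \<longleftrightarrow>
     (\<forall>c::complex. det (mat c - (\<chi> i j. complex_of_real (A $ i $ j))) = 0
        \<longrightarrow> Re c < 0)"

definition pos_def :: "real^'m^'m \<Rightarrow> bool" where
  "pos_def M \<longleftrightarrow> (\<forall>v. v \<noteq> 0 \<longrightarrow> v \<bullet> (M *v v) > 0)"

definition neg_def :: "real^'m^'m \<Rightarrow> bool" where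
  "neg_def M \<longleftrightarrow> (\<forall>v. v \<noteq> 0 \<longrightarrow> v \<bullet> (M *v v) < 0)"

text \<open>Closed-loop vector field on the state space indexed by n + bool:
  coordinates Inl j are x_j, Inr False is z1, Inr True is z2. The index k plays the
  role of the last coordinate n.\<close>
definition closed_loop ::
  "(real^'n \<Rightarrow> real^'n) \<Rightarrow> real^'n \<Rightarrow> 'n \<Rightarrow> real \<Rightarrow> real \<Rightarrow> real \<Rightarrow> real
    \<Rightarrow> real^('n + bool) \<Rightarrow> real^('n + bool)" where
  "closed_loop f b0 k \<mu> \<theta> \<eta> kp X =
     (let x = (\<chi> j. X $ Inl j); z1 = X $ Inr False; z2 = X $ Inr True;
          dx = f x - (kp * x $ k * z2) *\<^sub>R axis k 1 + b0
      in (\<chi> i. case i of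
                Inl j \<Rightarrow> dx $ j
              | Inr False \<Rightarrow> \<mu> - \<eta> * kp * z1 * z2
              | Inr True \<Rightarrow> \<theta> * x $ k - \<eta> * kp * z1 * z2))"

definition state_of :: "real^'n \<Rightarrow> real \<Rightarrow> real \<Rightarrow> real^('n + bool)" where
  "state_of x z1 z2 = (\<chi> i. case i of Inl j \<Rightarrow> x $ j | Inr False \<Rightarrow> z1 | Inr True \<Rightarrow> z2)"

end

theory Submission
  imports Defs
begin

text \<open>At the equilibrium the linearization has x-block \<open>J - u\<^sub>* e\<^sub>n e\<^sub>n\<^sup>T\<close>, coupled to the
  controller states only through \<open>x\<^sub>n\<close> and \<open>z\<^sub>2\<close>. For an eigenvector \<open>(x, z\<^sub>1, z\<^sub>2)\<close> with eigenvalue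
  \<open>c\<close>, \<open>Re c \<ge> 0\<close>, the two controller rows give \<open>z\<^sub>2 = \<theta> (c + a\<^sub>1) / (c (c + a\<^sub>1 + a\<^sub>2)) x\<^sub>n\<close>
  with \<open>a\<^sub>1 = \<eta> u\<^sub>*\<close>, \<open>a\<^sub>2 = k\<^sub>p \<mu> / u\<^sub>*\<close>, a positive-real relation, so \<open>Re (z\<^sub>2 conj x\<^sub>n) \<ge> 0\<close>. Because \<open>P e\<^sub>n = e\<^sub>n\<close>, the Lyapunov form
  of \<open>P\<close> along \<open>x\<close> picks up exactly this coupling term, so the LMI forces \<open>x = 0\<close>; then the
  remaining rows force \<open>z\<^sub>2 = z\<^sub>1 = 0\<close>.\<close>

lemma vec_lambda_has_derivative:
  fixes g :: "'i::finite \<Rightarrow> 'a::real_normed_vector \<Rightarrow> real"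
  assumes "\<And>i. (g i has_derivative g' i) (at a within S)"
  shows "((\<lambda>x. \<chi> i. g i x) has_derivative (\<lambda>h. \<chi> i. g' i h)) (at a within S)"
proof (subst has_derivative_componentwise_within, intro ballI)
  fix b :: "real^'i" assume "b \<in> Basis"
  then obtain i where b: "b = axis i 1" by (auto simp: Basis_vec_def)
  show "((\<lambda>x. (\<chi> i. g i x) \<bullet> b) has_derivative (\<lambda>x. (\<chi> i. g' i x) \<bullet> b)) (at a within S)"
    by (simp add: b inner_axis assms)
qed

lemma sum_UNIV_Plus_bool:
  "(\<Sum>i\<in>UNIV. g i) = (\<Sum>j\<in>UNIV. g (Inl j)) + g (Inr False) + g (Inr True)"
  for g :: "'a::finite + bool \<Rightarrow> 'b::comm_monoid_add"
proof -
  have "(\<Sum>i\<in>UNIV. g i) = (\<Sum>i\<in>UNIV <+> UNIV. g i)" by simp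
  also have "\<dots> = (\<Sum>j\<in>UNIV. g (Inl j)) + (\<Sum>b\<in>UNIV. g (Inr b))"
    by (subst sum.Plus) auto
  also have "(\<Sum>b\<in>UNIV. g (Inr b)) = g (Inr False) + g (Inr True)"
    by (simp add: UNIV_bool add.commute)
  finally show ?thesis by (simp add: add.assoc)
qed

lemma state_of_nth [simp]:
  "state_of x z1 z2 $ Inl j = x $ j"
  "state_of x z1 z2 $ Inr False = z1"
  "state_of x z1 z2 $ Inr True = z2"
  by (simp_all add: state_of_def)

lemma state_of_Inl_part [simp]: "(\<chi> j. state_of x z1 z2 $ Inl j) = x"
  by (simp add: vec_eq_iff)

lemma state_of_eq_0_iff: "state_of x z1 z2 = 0 \<longleftrightarrow> x = 0 \<and> z1 = 0 \<and> z2 = 0"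
  by (auto simp: vec_eq_iff state_of_def split: sum.split bool.split)

lemma vec_Plus_bool_eq_0I:
  assumes "\<And>j. X $ Inl j = 0" "X $ Inr False = 0" "X $ Inr True = 0"
  shows "X = 0"
  using assms unfolding vec_eq_iff by (metis (full_types) sum.exhaust zero_index)

lemma has_derivative_state_of:
  assumes "(g has_derivative g') (at a within S)" "(p has_derivative p') (at a within S)"
    and "(q has_derivative q') (at a within S)"
  shows "((\<lambda>X. state_of (g X) (p X) (q X)) has_derivative (\<lambda>h. state_of (g' h) (p' h) (q' h)))
           (at a within S)"
  unfolding state_of_def
proof (rule vec_lambda_has_derivative, goal_cases)
  case (1 i)
  show ?case
  proof (cases i)
    case (Inl j)
    then show ?thesis using bounded_linear.has_derivative[OF bounded_linear_vec_nth assms(1)] by simp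
  next
    case (Inr b)
    then show ?thesis using assms(2,3) by (cases b) simp_all
  qed
qed

lemma closed_loop_eq_state_of:
  "closed_loop f b0 k \<mu> \<theta> \<eta> kp X =
     state_of (f (\<chi> j. X $ Inl j) - (kp * (X $ Inl k * X $ Inr True)) *\<^sub>R axis k 1 + b0)
              (\<mu> - \<eta> * kp * (X $ Inr False * X $ Inr True))
              (\<theta> * X $ Inl k - \<eta> * kp * (X $ Inr False * X $ Inr True))"
  by (simp add: closed_loop_def state_of_def Let_def mult.assoc)

lemma closed_loop_equilibrium:
  assumes "\<theta> > 0" "\<eta> > 0" "kp > 0" "us > 0" "xs $ k = \<mu> / \<theta>"
    and "f xs - (us * (\<mu> / \<theta>)) *\<^sub>R axis k 1 + b0 = 0"
  shows "closed_loop f b0 k \<mu> \<theta> \<eta> kp (state_of xs (\<mu> / (\<eta> * us)) (us / kp)) = 0"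
proof -
  have "kp * (xs $ k * (us / kp)) = us * (\<mu> / \<theta>)" and "\<eta> * kp * (\<mu> / (\<eta> * us) * (us / kp)) = \<mu>"
    using assms(1-5) by (simp_all add: field_simps)
  then show ?thesis
    using assms by (simp add: closed_loop_eq_state_of state_of_eq_0_iff mult.commute)
qed

definition loop_jacobian ::
  "real^'n^'n \<Rightarrow> 'n \<Rightarrow> real \<Rightarrow> real \<Rightarrow> real \<Rightarrow> real \<Rightarrow> real^('n + bool)^('n + bool)" where
  "loop_jacobian A k kr th a1 a2 = (\<chi> i l. case i of
     Inl j \<Rightarrow> (case l of Inl m \<Rightarrow> A $ j $ m | Inr False \<Rightarrow> 0 | Inr True \<Rightarrow> if j = k then - kr else 0)
   | Inr False \<Rightarrow> (case l of Inl m \<Rightarrow> 0 | Inr False \<Rightarrow> - a1 | Inr True \<Rightarrow> - a2)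
   | Inr True \<Rightarrow> (case l of Inl m \<Rightarrow> if m = k then th else 0 | Inr False \<Rightarrow> - a1 | Inr True \<Rightarrow> - a2))"

lemma loop_jacobian_mult:
  "loop_jacobian A k kr th a1 a2 *v h =
     state_of (A *v (\<chi> j. h $ Inl j) - (kr * h $ Inr True) *\<^sub>R axis k 1)
              (- a1 * h $ Inr False - a2 * h $ Inr True)
              (th * h $ Inl k - a1 * h $ Inr False - a2 * h $ Inr True)"
proof (subst vec_eq_iff, intro allI, goal_cases)
  case (1 i)
  show ?case
    by (cases i rule: sum.exhaust; cases "i = Inr True")
      (auto simp: matrix_vector_mult_def sum_UNIV_Plus_bool loop_jacobian_def axis_def
         if_distrib[where f="\<lambda>a. a * _"] cong: if_cong)
qed

lemma matrix_unit_mult: "(\<chi> i j. if i = k \<and> j = k then 1 else 0) *v v = (v $ k) *\<^sub>R axis k (1::real)"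
  by (auto simp: vec_eq_iff matrix_vector_mult_def axis_def if_distrib[where f="\<lambda>a. a * _"] cong: if_cong)

lemma Inl_part_has_derivative:
  "((\<lambda>X :: real^('n::finite + 'b::finite). \<chi> j. X $ Inl j) has_derivative (\<lambda>h. \<chi> j. h $ Inl j)) (at a within S)"
  by (rule vec_lambda_has_derivative) (rule bounded_linear_imp_has_derivative[OF bounded_linear_vec_nth])

lemma closed_loop_has_derivative:
  assumes "(f has_derivative (\<lambda>h. Df *v h)) (at x)"
  shows "(closed_loop f b0 k \<mu> \<theta> \<eta> kp has_derivative
           (\<lambda>h. loop_jacobian (Df - (kp * z2) *\<^sub>R (\<chi> i j. if i = k \<and> j = k then 1 else 0))
                   k (kp * x $ k) \<theta> (\<eta> * kp * z2) (\<eta> * kp * z1) *v h))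
         (at (state_of x z1 z2))"
proof -
  have f_deriv: "((\<lambda>X. f (\<chi> j. X $ Inl j)) has_derivative (\<lambda>h. Df *v (\<chi> j. h $ Inl j))) (at (state_of x z1 z2))"
  proof -
    have "(f has_derivative (\<lambda>h. Df *v h)) (at (\<chi> j. state_of x z1 z2 $ Inl j))"
      using assms by simp
    then show ?thesis
      by (rule has_derivative_compose[OF Inl_part_has_derivative])
  qed
  have nth: "((\<lambda>X. X $ i) has_derivative (\<lambda>h. h $ i)) (at (state_of x z1 z2))" for i
    by (rule bounded_linear_imp_has_derivative[OF bounded_linear_vec_nth])
  have prod: "((\<lambda>X. X $ i * X $ l) has_derivative
      (\<lambda>h. state_of x z1 z2 $ i * h $ l + h $ i * state_of x z1 z2 $ l)) (at (state_of x z1 z2))" for i l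
    by (rule has_derivative_mult[OF nth nth])
  have "((\<lambda>X. f (\<chi> j. X $ Inl j) - (kp * (X $ Inl k * X $ Inr True)) *\<^sub>R axis k 1 + b0) has_derivative
      (\<lambda>h. Df *v (\<chi> j. h $ Inl j) - (kp * (x $ k * h $ Inr True + h $ Inl k * z2)) *\<^sub>R axis k 1))
      (at (state_of x z1 z2))"
    using prod[of "Inl k" "Inr True"]
    by (intro has_derivative_add_const has_derivative_diff f_deriv has_derivative_scaleR_left
        has_derivative_mult_right) simp
  moreover have "((\<lambda>X. c - \<eta> * kp * (X $ Inr False * X $ Inr True)) has_derivative
      (\<lambda>h. - (\<eta> * kp * z2) * h $ Inr False - (\<eta> * kp * z1) * h $ Inr True)) (at (state_of x z1 z2))" for c
    by (rule has_derivative_eq_rhs[OF has_derivative_diff[OF has_derivative_const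
          has_derivative_mult_right[OF prod[of "Inr False" "Inr True"]]]])
      (simp add: fun_eq_iff algebra_simps)
  moreover have "((\<lambda>X. \<theta> * X $ Inl k - \<eta> * kp * (X $ Inr False * X $ Inr True)) has_derivative
      (\<lambda>h. \<theta> * h $ Inl k - (\<eta> * kp * z2) * h $ Inr False - (\<eta> * kp * z1) * h $ Inr True))
      (at (state_of x z1 z2))"
    by (rule has_derivative_eq_rhs[OF has_derivative_diff[OF has_derivative_mult_right[OF nth]
          has_derivative_mult_right[OF prod[of "Inr False" "Inr True"]]]])
      (simp add: fun_eq_iff algebra_simps)
  ultimately have "(closed_loop f b0 k \<mu> \<theta> \<eta> kp has_derivative
      (\<lambda>h. state_of (Df *v (\<chi> j. h $ Inl j) - (kp * (x $ k * h $ Inr True + h $ Inl k * z2)) *\<^sub>R axis k 1)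
         (- (\<eta> * kp * z2) * h $ Inr False - (\<eta> * kp * z1) * h $ Inr True)
         (\<theta> * h $ Inl k - (\<eta> * kp * z2) * h $ Inr False - (\<eta> * kp * z1) * h $ Inr True)))
      (at (state_of x z1 z2))"
    unfolding closed_loop_eq_state_of[abs_def] by (rule has_derivative_state_of)
  then show ?thesis
    by (rule has_derivative_eq_rhs)
      (simp add: fun_eq_iff loop_jacobian_mult matrix_vector_mult_diff_rdistrib
        scaleR_matrix_vector_assoc[symmetric] matrix_unit_mult algebra_simps)
qed

lemma det_eq_0_imp_kernel:
  fixes M :: "'a::field^'n^'n"
  assumes "det M = 0"
  obtains X where "X \<noteq> 0" "M *v X = 0"
proof -
  have "\<not> inj ((*v) M)"
    using det_nz_iff_inj_gen[of "(*v) M"] assms by simp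
  then show ?thesis
    by (metis (no_types, lifting) injI matrix_vector_mult_diff_distrib right_minus_eq that)
qed

lemma real_eigenpair_of_complex_eigenvalue:
  fixes A :: "real^'n^'n"
  assumes "det (mat c - (\<chi> i j. complex_of_real (A $ i $ j))) = 0"
  obtains u v where "u \<noteq> 0 \<or> v \<noteq> 0"
    and "A *v u = Re c *\<^sub>R u - Im c *\<^sub>R v" and "A *v v = Im c *\<^sub>R u + Re c *\<^sub>R v"
proof -
  obtain X where "X \<noteq> 0" and X: "(mat c - (\<chi> i j. complex_of_real (A $ i $ j))) *v X = 0"
    using assms by (rule det_eq_0_imp_kernel)
  have "mat c *v X = c *s X"
    by (simp add: vec_eq_iff matrix_vector_mult_def mat_def if_distrib[where f="\<lambda>a. a * _"] cong: if_cong)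
  then have "c *s X = (\<chi> i j. complex_of_real (A $ i $ j)) *v X"
    using X by (simp add: matrix_vector_mult_diff_rdistrib)
  then have eig: "c * X $ i = (\<Sum>l\<in>UNIV. complex_of_real (A $ i $ l) * X $ l)" for i
    by (simp add: vec_eq_iff matrix_vector_mult_def)
  define u where "u = (\<chi> i. Re (X $ i))"
  define v where "v = (\<chi> i. Im (X $ i))"
  have "u \<noteq> 0 \<or> v \<noteq> 0"
    using \<open>X \<noteq> 0\<close> by (auto simp: u_def v_def vec_eq_iff complex_eq_iff)
  moreover have "A *v u = Re c *\<^sub>R u - Im c *\<^sub>R v"
    using arg_cong[OF eig, of Re] by (simp add: vec_eq_iff matrix_vector_mult_def u_def v_def Re_sum)
  moreover have "A *v v = Im c *\<^sub>R u + Re c *\<^sub>R v"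
    using arg_cong[OF eig, of Im] by (simp add: vec_eq_iff matrix_vector_mult_def u_def v_def Im_sum add.commute)
  ultimately show ?thesis by (rule that)
qed

lemma quadratic_form_lyapunov:
  fixes M P :: "real^'n^'n"
  assumes "transpose P = P"
  shows "w \<bullet> ((transpose M ** P + P ** M) *v w) = 2 * ((M *v w) \<bullet> (P *v w))"
proof -
  have transpose_inner: "u \<bullet> (transpose B *v v) = (B *v u) \<bullet> v" for B :: "real^'n^'n" and u v
    by (metis dot_lmul_matrix vector_transpose_matrix)
  have "w \<bullet> ((transpose M ** P + P ** M) *v w) = w \<bullet> (transpose M *v (P *v w)) + w \<bullet> (P *v (M *v w))"
    by (simp add: matrix_vector_mult_add_rdistrib matrix_vector_mul_assoc inner_add_right)
  also have "\<dots> = 2 * ((M *v w) \<bullet> (P *v w))"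
    using transpose_inner[of w M "P *v w"] transpose_inner[of w P "M *v w"] assms
    by (simp add: inner_commute)
  finally show ?thesis .
qed

lemma lyapunov_eigenpair_eq_0:
  fixes M P :: "real^'n^'n"
  assumes P_sym: "transpose P = P" and P_pd: "pos_def P"
    and Q_nd: "neg_def (transpose M ** P + P ** M)"
    and Mu: "M *v u = \<sigma> *\<^sub>R u - \<omega> *\<^sub>R v + g" and Mv: "M *v v = \<omega> *\<^sub>R u + \<sigma> *\<^sub>R v + h"
    and "\<sigma> \<ge> 0" and "g \<bullet> (P *v u) + h \<bullet> (P *v v) \<ge> 0"
  shows "u = 0 \<and> v = 0"
proof -
  let ?q = "\<lambda>w. w \<bullet> ((transpose M ** P + P ** M) *v w)"
  have P_swap: "v \<bullet> (P *v u) = u \<bullet> (P *v v)"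
    by (metis P_sym dot_lmul_matrix inner_commute vector_transpose_matrix)
  have "?q u + ?q v = 2 * (\<sigma> * (u \<bullet> (P *v u) + v \<bullet> (P *v v)) + (g \<bullet> (P *v u) + h \<bullet> (P *v v)))"
    unfolding quadratic_form_lyapunov[OF P_sym] Mu Mv
    by (simp add: inner_add_left inner_diff_left P_swap algebra_simps)
  moreover have "w \<bullet> (P *v w) \<ge> 0" for w
    using P_pd unfolding pos_def_def by (cases "w = 0") (auto intro: less_imp_le)
  ultimately have "?q u + ?q v \<ge> 0"
    using assms(6,7) by simp
  moreover have neg: "?q w < 0" if "w \<noteq> 0" for w
    using Q_nd that unfolding neg_def_def by blast
  moreover have "?q w \<le> 0" for w
    using neg[of w] by (cases "w = 0") auto
  ultimately show ?thesis
    by (meson add_neg_nonpos add_nonpos_neg not_le)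
qed

lemma controller_eigen_Re_mult_cnj_nonneg:
  fixes c z1 z2 xk :: complex and a1 a2 th :: real
  assumes "Re c \<ge> 0" "a1 > 0" "a2 > 0" "th > 0"
    and z1_eq: "c * z1 = - a1 * z1 - a2 * z2"
    and z2_eq: "c * z2 = th * xk - a1 * z1 - a2 * z2"
  shows "Re (z2 * cnj xk) \<ge> 0"
proof -
  define d where "d = z2 - z1"
  define w where "w = c + a1 + a2"
  have cd: "c * d = th * xk"
    unfolding d_def right_diff_distrib z1_eq z2_eq by (simp add: algebra_simps)
  have "w * z2 - (c + a1) * d = c * z1 + a1 * z1 + a2 * z2"
    by (simp add: w_def d_def algebra_simps)
  also have "\<dots> = 0"
    unfolding z1_eq by (simp add: algebra_simps)
  finally have wz: "w * z2 = (c + a1) * d" by simp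
  have "th * (w * cnj w) * (z2 * cnj xk) = cnj w * (w * z2) * cnj (th * xk)"
    by (simp add: algebra_simps)
  also have "\<dots> = ((c + a1) * cnj c * cnj w) * (d * cnj d)"
    by (simp add: wz flip: cd)
  finally have key: "th * (w * cnj w) * (z2 * cnj xk) = ((c + a1) * cnj c * cnj w) * (d * cnj d)" .
  have "Re ((c + a1) * cnj c * cnj w) = ((Re c)\<^sup>2 + a1 * Re c) * (Re c + a1 + a2) + (Im c)\<^sup>2 * (Re c + a2)"
    by (simp add: w_def algebra_simps power2_eq_square)
  also have "\<dots> \<ge> 0"
    using assms(1-3) by (intro add_nonneg_nonneg mult_nonneg_nonneg) auto
  finally have "Re ((c + a1) * cnj c * cnj w) * ((Re d)\<^sup>2 + (Im d)\<^sup>2) \<ge> 0"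
    by simp
  moreover have "Re (th * (w * cnj w) * (z2 * cnj xk)) = th * ((Re w)\<^sup>2 + (Im w)\<^sup>2) * Re (z2 * cnj xk)"
    by (simp only: complex_mult_cnj) (simp add: mult.assoc flip: of_real_mult)
  moreover have "Re ((c + a1) * cnj c * cnj w * (d * cnj d)) = Re ((c + a1) * cnj c * cnj w) * ((Re d)\<^sup>2 + (Im d)\<^sup>2)"
    by (simp only: complex_mult_cnj) (simp flip: of_real_mult)
  ultimately have "th * ((Re w)\<^sup>2 + (Im w)\<^sup>2) * Re (z2 * cnj xk) \<ge> 0"
    using key by metis
  moreover have "th * ((Re w)\<^sup>2 + (Im w)\<^sup>2) > 0"
    using assms(1-4) by (simp add: w_def add_pos_nonneg)
  ultimately show ?thesis
    using zero_le_mult_iff by (metis not_le)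
qed

lemma loop_jacobian_eigenpair_eq_0:
  fixes A P :: "real^'n^'n"
  assumes P_sym: "transpose P = P" and P_pd: "pos_def P"
    and P_row: "\<forall>j. P $ k $ j = (if j = k then 1 else 0)"
    and Q_nd: "neg_def (transpose A ** P + P ** A)"
    and pos: "kr > 0" "th > 0" "a1 > 0" "a2 > 0" and "\<sigma> \<ge> 0"
    and JU: "loop_jacobian A k kr th a1 a2 *v U = \<sigma> *\<^sub>R U - \<omega> *\<^sub>R V"
    and JV: "loop_jacobian A k kr th a1 a2 *v V = \<omega> *\<^sub>R U + \<sigma> *\<^sub>R V"
  shows "U = 0 \<and> V = 0"
proof -
  let ?J = "loop_jacobian A k kr th a1 a2"
  define c where "c = Complex \<sigma> \<omega>"
  define u where "u = (\<chi> j. U $ Inl j)"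
  define v where "v = (\<chi> j. V $ Inl j)"
  define z1 where "z1 = Complex (U $ Inr False) (V $ Inr False)"
  define z2 where "z2 = Complex (U $ Inr True) (V $ Inr True)"
  define xk where "xk = Complex (u $ k) (v $ k)"
  have c_nonneg: "Re c \<ge> 0"
    using \<open>\<sigma> \<ge> 0\<close> by (simp add: c_def)
  have JU_i: "(?J *v U) $ i = (Re c *\<^sub>R U - Im c *\<^sub>R V) $ i"
    and JV_i: "(?J *v V) $ i = (Im c *\<^sub>R U + Re c *\<^sub>R V) $ i" for i
    using JU JV by (simp_all add: c_def)
  have Au: "A *v u = Re c *\<^sub>R u - Im c *\<^sub>R v + (kr * Re z2) *\<^sub>R axis k 1"
    using JU_i[of "Inl _"] by (simp add: loop_jacobian_mult vec_eq_iff u_def v_def z2_def diff_eq_eq)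
  have Av: "A *v v = Im c *\<^sub>R u + Re c *\<^sub>R v + (kr * Im z2) *\<^sub>R axis k 1"
    using JV_i[of "Inl _"] by (simp add: loop_jacobian_mult vec_eq_iff u_def v_def z2_def diff_eq_eq)
  have z1_eq: "c * z1 = - a1 * z1 - a2 * z2"
    using JU_i[of "Inr False"] JV_i[of "Inr False"]
    by (simp add: loop_jacobian_mult complex_eq_iff z1_def z2_def)
  have z2_eq: "c * z2 = th * xk - a1 * z1 - a2 * z2"
    using JU_i[of "Inr True"] JV_i[of "Inr True"]
    by (simp add: loop_jacobian_mult complex_eq_iff z1_def z2_def xk_def u_def v_def)
  have P_k: "(P *v w) $ k = w $ k" for w :: "real^'n"
    using P_row by (simp add: matrix_vector_mult_def if_distrib[where f="\<lambda>a. a * _"] cong: if_cong)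
  have "Re (z2 * cnj xk) \<ge> 0"
    by (rule controller_eigen_Re_mult_cnj_nonneg[OF c_nonneg pos(3,4,2) z1_eq z2_eq])
  moreover have "((kr * Re z2) *\<^sub>R axis k 1) \<bullet> (P *v u) + ((kr * Im z2) *\<^sub>R axis k 1) \<bullet> (P *v v)
      = kr * Re (z2 * cnj xk)"
    by (simp add: inner_axis' P_k xk_def distrib_left mult.assoc)
  ultimately have "u = 0 \<and> v = 0"
    using pos(1) by (intro lyapunov_eigenpair_eq_0[OF P_sym P_pd Q_nd Au Av c_nonneg]) simp
  then have "z2 = 0"
    using Au Av pos(1) by (simp add: complex_eq_iff axis_eq_0_iff)
  moreover have "c + a1 \<noteq> 0"
    using c_nonneg pos(3) by (auto simp: complex_eq_iff)
  moreover have "(c + a1) * z1 = 0"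
    using z1_eq \<open>z2 = 0\<close> by (simp add: algebra_simps)
  ultimately have "z1 = 0"
    by simp
  with \<open>u = 0 \<and> v = 0\<close> \<open>z2 = 0\<close> show ?thesis
    by (intro conjI vec_Plus_bool_eq_0I) (auto simp: complex_eq_iff z1_def z2_def u_def v_def vec_eq_iff)
qed

lemma hurwitz_loop_jacobian:
  fixes A P :: "real^'n^'n"
  assumes "transpose P = P" "pos_def P" "\<forall>j. P $ k $ j = (if j = k then 1 else 0)"
    and "neg_def (transpose A ** P + P ** A)"
    and "kr > 0" "th > 0" "a1 > 0" "a2 > 0"
  shows "hurwitz (loop_jacobian A k kr th a1 a2)"
  unfolding hurwitz_def
proof (intro allI impI)
  fix c :: complex
  assume "det (mat c - (\<chi> i j. complex_of_real (loop_jacobian A k kr th a1 a2 $ i $ j))) = 0"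
  then obtain U V where "U \<noteq> 0 \<or> V \<noteq> 0"
    and "loop_jacobian A k kr th a1 a2 *v U = Re c *\<^sub>R U - Im c *\<^sub>R V"
    and "loop_jacobian A k kr th a1 a2 *v V = Im c *\<^sub>R U + Re c *\<^sub>R V"
    by (rule real_eigenpair_of_complex_eigenvalue)
  then show "Re c < 0"
    using loop_jacobian_eigenpair_eq_0[OF assms, of "Re c" U "Im c" V] by (meson not_le)
qed

theorem mainTheorem14:
  fixes f :: "real^'n \<Rightarrow> real^'n"
    and Df :: "real^'n \<Rightarrow> real^'n^'n"
    and k :: 'n
    and b0 xs :: "real^'n"
    and \<mu> \<theta> us :: real
    and P :: "real^'n^'n"
  assumes n2: "CARD('n) \<ge> 2"
    and deriv: "\<And>x. (f has_derivative (\<lambda>h. Df x *v h)) (at x)"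
    and C1: "continuous_on UNIV Df"
    and b0_nonneg: "\<forall>i. b0 $ i \<ge> 0"
    and mu_pos: "\<mu> > 0" and theta_pos: "\<theta> > 0"
    and xs_nonneg: "\<forall>i. xs $ i \<ge> 0"
    and us_pos: "us > 0"
    and xs_k: "xs $ k = \<mu> / \<theta>"
    and eq: "f xs - (us * (\<mu> / \<theta>)) *\<^sub>R axis k 1 + b0 = 0"
    and Hn: "matrix_inv (- (Df xs - us *\<^sub>R (\<chi> i j. if i = k \<and> j = k then 1 else 0))) $ k $ k > 0"
    and P_sym: "transpose P = P"
    and P_pd: "pos_def P"
    and P_blk: "\<forall>j. P $ k $ j = (if j = k then 1 else 0)"
    and LMI: "neg_def (transpose (Df xs - us *\<^sub>R (\<chi> i j. if i = k \<and> j = k then 1 else 0)) ** P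
                     + P ** (Df xs - us *\<^sub>R (\<chi> i j. if i = k \<and> j = k then 1 else 0)))"
  shows "\<forall>\<eta> kp. \<eta> > 0 \<longrightarrow> kp > 0 \<longrightarrow>
           closed_loop f b0 k \<mu> \<theta> \<eta> kp (state_of xs (\<mu> / (\<eta> * us)) (us / kp)) = 0 \<and>
           (\<exists>A. (closed_loop f b0 k \<mu> \<theta> \<eta> kp has_derivative (\<lambda>h. A *v h))
                    (at (state_of xs (\<mu> / (\<eta> * us)) (us / kp))) \<and> hurwitz A)"
proof (intro allI impI)
  fix \<eta> kp :: real
  assume eta: "\<eta> > 0" and kp: "kp > 0"
  let ?E = "(\<chi> i j. if i = k \<and> j = k then 1 else 0) :: real^'n^'n"
  let ?J = "loop_jacobian (Df xs - us *\<^sub>R ?E) k (kp * xs $ k) \<theta> (\<eta> * us) (kp * \<mu> / us)"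
  have "(closed_loop f b0 k \<mu> \<theta> \<eta> kp has_derivative
      (\<lambda>h. loop_jacobian (Df xs - (kp * (us / kp)) *\<^sub>R ?E) k (kp * xs $ k) \<theta>
              (\<eta> * kp * (us / kp)) (\<eta> * kp * (\<mu> / (\<eta> * us))) *v h))
      (at (state_of xs (\<mu> / (\<eta> * us)) (us / kp)))"
    by (rule closed_loop_has_derivative[OF deriv])
  moreover have "kp * (us / kp) = us" "\<eta> * kp * (us / kp) = \<eta> * us" "\<eta> * kp * (\<mu> / (\<eta> * us)) = kp * \<mu> / us"
    using eta kp us_pos by simp_all
  ultimately have "(closed_loop f b0 k \<mu> \<theta> \<eta> kp has_derivative (\<lambda>h. ?J *v h))
      (at (state_of xs (\<mu> / (\<eta> * us)) (us / kp)))"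
    by (simp only:)
  moreover have "closed_loop f b0 k \<mu> \<theta> \<eta> kp (state_of xs (\<mu> / (\<eta> * us)) (us / kp)) = 0"
    using eq by (intro closed_loop_equilibrium theta_pos eta kp us_pos xs_k)
  moreover have "hurwitz ?J"
    using eta kp mu_pos theta_pos us_pos xs_k
    by (intro hurwitz_loop_jacobian[OF P_sym P_pd P_blk LMI]) simp_all
  ultimately show "closed_loop f b0 k \<mu> \<theta> \<eta> kp (state_of xs (\<mu> / (\<eta> * us)) (us / kp)) = 0 \<and>
      (\<exists>A. (closed_loop f b0 k \<mu> \<theta> \<eta> kp has_derivative (\<lambda>h. A *v h))
             (at (state_of xs (\<mu> / (\<eta> * us)) (us / kp))) \<and> hurwitz A)"
    by blast
qed

end
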